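(* Let $c$ be a statement and $s$ a state. If $((\mathit{Loc}\ c\ \mathit{PTop},\mathit{True}),s) \rightarrow^* (cf',s')$ in the small-step semantics, then there exist a syntactic configuration $cfa'$ and a state $sa'$ such that $\mathit{stmt\_to\_ta}\ c \vdash (\mathit{init\_s}(\mathit{stmt\_to\_ta}\ c), s) \rightarrow^* (cfa',sa')$ and $(cf',s') \approx (cfa',sa')$.
   Context: Syntax. Values: $\mathit{val} ::= \mathit{Bool}\ b \mid \mathit{Null}$. Expressions: $\mathit{expr} ::= \mathit{Val}\ v \mid \mathit{Var}\ x$. Statements: $\mathit{stmt} ::= \mathit{Empty} \mid \mathit{Assign}\ x\ v \mid \mathit{Seq}\ c_1\ c_2 \mid \mathit{Cond}\ e\ c_1\ c_2 \mid \mathit{While}\ e\ c$. Statement paths: $\mathit{stmt\_path} ::= \mathit{PTop} \mid \mathit{PSeqLeft}\ sp\ c_2 \mid \mathit{PSeqRight}\ c_1\ sp \mid \mathit{PCondLeft}\ e\ sp\ c_2 \mid \mathit{PCondRight}\ e\ c_1\ sp \mid \mathit{PWhile}\ e\ sp$. A location is $\mathit{Loc}\ c\ sp$; a syntactic configuration is a pair (location, Boolean). A state maps variable names to $\mathit{Some}\ v$ or $\mathit{None}$; $s(x\mapsto v)$ updates $x$ to $\mathit{Some}\ v$. $\mathit{eval}(\mathit{Val}\ v)\ s=v$; $\mathit{eval}(\mathit{Var}\ x)\ s=v$ if $s\,x=\mathit{Some}\ v$, else $\mathit{Null}$. Next location: $\mathit{next\_loc}\ c\ \mathit{PTop} = (\mathit{Loc}\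 c\ \mathit{PTop}, \mathit{False})$; $\mathit{next\_loc}\ c\ (\mathit{PSeqLeft}\ sp\ c_2) = (\mathit{Loc}\ c_2\ (\mathit{PSeqRight}\ c\ sp), \mathit{True})$; $\mathit{next\_loc}\ c\ (\mathit{PSeqRight}\ c_1\ sp) = (\mathit{Loc}\ (\mathit{Seq}\ c_1\ c)\ sp, \mathit{False})$; $\mathit{next\_loc}\ c\ (\mathit{PCondLeft}\ e\ sp\ c_2) = (\mathit{Loc}\ (\mathit{Cond}\ e\ c\ c_2)\ sp, \mathit{False})$; $\mathit{next\_loc}\ c\ (\mathit{PCondRight}\ e\ c_1\ sp) = (\mathit{Loc}\ (\mathit{Cond}\ e\ c_1\ c)\ sp, \mathit{False})$; $\mathit{next\_loc}\ c\ (\mathit{PWhile}\ e\ sp) = (\mathit{Loc}\ (\mathit{While}\ e\ c)\ sp, \mathit{True})$. Small-step semantics $\rightarrow$ on pairs (syntactic configuration, state), least relation with: $((\mathit{Loc}\ \mathit{Empty}\ sp,\mathit{True}),s)\rightarrow((\mathit{Loc}\ \mathit{Empty}\ sp,\mathit{False}),s)$; $((\mathit{Loc}\ (\mathit{Assign}\ x\ v)\ sp,\mathit{True}),s)\rightarrow((\mathit{Loc}\ (\mathit{Assign}\ x\ v)\ sp,\mathit{False}),s(x\mapsto v))$; $((\mathit{Loc}\ (\mathit{Seq}\ c_1\ c_2)\ sp,\mathit{True}),s)\rightarrow((\mathit{Loc}\ c_1\ (\mathit{PSeqLeft}\ sp\ c_2),\mathit{True}),s)$; if $\mathit{eval}\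 e\ s=\mathit{Bool}\ \mathit{True}$: $((\mathit{Loc}\ (\mathit{Cond}\ e\ c_1\ c_2)\ sp,\mathit{True}),s)\rightarrow((\mathit{Loc}\ c_1\ (\mathit{PCondLeft}\ e\ sp\ c_2),\mathit{True}),s)$; if $\mathit{eval}\ e\ s=\mathit{Bool}\ \mathit{False}$: $((\mathit{Loc}\ (\mathit{Cond}\ e\ c_1\ c_2)\ sp,\mathit{True}),s)\rightarrow((\mathit{Loc}\ c_2\ (\mathit{PCondRight}\ e\ c_1\ sp),\mathit{True}),s)$; if $\mathit{eval}\ e\ s=\mathit{Bool}\ \mathit{True}$: $((\mathit{Loc}\ (\mathit{While}\ e\ c)\ sp,\mathit{True}),s)\rightarrow((\mathit{Loc}\ c\ (\mathit{PWhile}\ e\ sp),\mathit{True}),s)$; if $\mathit{eval}\ e\ s=\mathit{Bool}\ \mathit{False}$: $((\mathit{Loc}\ (\mathit{While}\ e\ c)\ sp,\mathit{True}),s)\rightarrow((\mathit{Loc}\ (\mathit{While}\ e\ c)\ sp,\mathit{False}),s)$; if $sp\neq\mathit{PTop}$: $((\mathit{Loc}\ c\ sp,\mathit{False}),s)\rightarrow(\mathit{next\_loc}\ c\ sp,s)$. $\rightarrow^*$ is its reflexive-transitive closure. Automata: actions $\mathit{NoAct}$, $\mathit{AssAct}\ x\ v$ with $\mathit{action\_effect}\ \mathit{NoAct}\ s=s$, $\mathit{action\_effect}(\mathit{AssAct}\ x\ v)\ s=s(x\mapsto v)$; an edge is a record $(\mathit{source},\mathit{action},\mathit{dest})$; an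 automaton has a node list $\mathit{nodes}$, edge list $\mathit{edges}$, initial node $\mathit{init\_s}$. $\mathit{aut}\vdash(l,s)\rightarrow(l',s')$ iff some $e\in\mathit{edges}(\mathit{aut})$ has $\mathit{source}\ e=l$, $\mathit{dest}\ e=l'$, $s'=\mathit{action\_effect}(\mathit{action}\ e)\ s$; $\rightarrow^*$ is the reflexive-transitive closure. $\mathit{all\_locations}\ c\ sp$: contains $\mathit{Loc}\ c\ sp$, plus for $c=\mathit{Seq}\ c_1\ c_2$ the elements of $\mathit{all\_locations}\ c_1\ (\mathit{PSeqLeft}\ sp\ c_2)$ and $\mathit{all\_locations}\ c_2\ (\mathit{PSeqRight}\ c_1\ sp)$; for $c=\mathit{Cond}\ e\ c_1\ c_2$ those of $\mathit{all\_locations}\ c_1\ (\mathit{PCondLeft}\ e\ sp\ c_2)$ and $\mathit{all\_locations}\ c_2\ (\mathit{PCondRight}\ e\ c_1\ sp)$; for $c=\mathit{While}\ e\ c'$ those of $\mathit{all\_locations}\ c'\ (\mathit{PWhile}\ e\ sp)$; nothing else. $\mathit{nodes\_of\_stmt\_locations}$ pairs each location with both $\mathit{True}$ and $\mathit{False}$. $\mathit{synt\_step\_image}$: $(\mathit{Loc}\ \mathit{Empty}\ sp,\mathit{True})\mapsto[(\mathit{Loc}\ \mathit{Empty}\ sp,\mathit{False})]$; $(\mathit{Loc}\ (\mathit{Assign}\ x\ v)\ sp,\mathit{True})\mapsto[(\mathit{Loc}\ (\mathit{Assign}\ x\ v)\ sp,\mathit{False})]$; $(\mathit{Loc}\ (\mathit{Seq}\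 c_1\ c_2)\ sp,\mathit{True})\mapsto[(\mathit{Loc}\ c_1\ (\mathit{PSeqLeft}\ sp\ c_2),\mathit{True})]$; $(\mathit{Loc}\ (\mathit{Cond}\ e\ c_1\ c_2)\ sp,\mathit{True})\mapsto[(\mathit{Loc}\ c_1\ (\mathit{PCondLeft}\ e\ sp\ c_2),\mathit{True}),(\mathit{Loc}\ c_2\ (\mathit{PCondRight}\ e\ c_1\ sp),\mathit{True})]$; $(\mathit{Loc}\ (\mathit{While}\ e\ c)\ sp,\mathit{True})\mapsto[(\mathit{Loc}\ c\ (\mathit{PWhile}\ e\ sp),\mathit{True}),(\mathit{Loc}\ (\mathit{While}\ e\ c)\ sp,\mathit{False})]$; $(\mathit{Loc}\ c\ sp,\mathit{False})\mapsto[\,]$ if $sp=\mathit{PTop}$, else $[\mathit{next\_loc}\ c\ sp]$. $\mathit{action\_of\_synt\_config}(\mathit{Loc}\ (\mathit{Assign}\ x\ v)\ sp,\mathit{True})=\mathit{AssAct}\ x\ v$, $\mathit{NoAct}$ otherwise. $\mathit{stmt\_to\_ta}\ c$ is the automaton with $\mathit{nodes}=nds:=\mathit{nodes\_of\_stmt\_locations}(\mathit{all\_locations}\ c\ \mathit{PTop})$, edges the list of all $(\mathit{source}=n,\mathit{action}=\mathit{action\_of\_synt\_config}\ n,\mathit{dest}=t)$ with $n\in nds$ and $t\in\mathit{synt\_step\_image}\ n$, and $\mathit{init\_s}=(\mathit{Loc}\ c\ \mathit{PTop},\mathit{True})$. The relation $\approx$ between (syntactic configuration, state) pairs is equality. 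*)

theory Defs
  imports Main
begin

type_synonym vname = string

datatype val = Bool bool | Null

datatype expr = Val val | Var vname

datatype stmt = Empty | Assign vname val | Seq stmt stmt | Cond expr stmt stmt | While expr stmt

datatype stmt_path = PTop | PSeqLeft stmt_path stmt | PSeqRight stmt stmt_path
  | PCondLeft expr stmt_path stmt | PCondRight expr stmt stmt_path | PWhile expr stmt_path

datatype location = Loc stmt stmt_path

type_synonym synt_config = "location \<times> bool"

type_synonym state = "vname \<Rightarrow> val option"

type_synonym config = "synt_config \<times> state"

fun eval :: "expr \<Rightarrow> state \<Rightarrow> val" where
  "eval (Val v) s = v"
| "eval (Var x) s = (case s x of Some v \<Rightarrow> v | None \<Rightarrow> Null)"

fun next_loc :: "stmt \<Rightarrow> stmt_path \<Rightarrow> synt_config" where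
  "next_loc c PTop = (Loc c PTop, False)"
| "next_loc c (PSeqLeft sp c2) = (Loc c2 (PSeqRight c sp), True)"
| "next_loc c (PSeqRight c1 sp) = (Loc (Seq c1 c) sp, False)"
| "next_loc c (PCondLeft e sp c2) = (Loc (Cond e c c2) sp, False)"
| "next_loc c (PCondRight e c1 sp) = (Loc (Cond e c1 c) sp, False)"
| "next_loc c (PWhile e sp) = (Loc (While e c) sp, True)"

inductive small_step :: "config \<Rightarrow> config \<Rightarrow> bool" (infix "\<rightarrow>" 50) where
  SEmpty: "((Loc Empty sp, True), s) \<rightarrow> ((Loc Empty sp, False), s)"
| SAssign: "((Loc (Assign x v) sp, True), s) \<rightarrow> ((Loc (Assign x v) sp, False), s(x \<mapsto> v))"
| SSeq: "((Loc (Seq c1 c2) sp, True), s) \<rightarrow> ((Loc c1 (PSeqLeft sp c2), True), s)"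
| SCondT: "eval e s = Bool True \<Longrightarrow>
    ((Loc (Cond e c1 c2) sp, True), s) \<rightarrow> ((Loc c1 (PCondLeft e sp c2), True), s)"
| SCondF: "eval e s = Bool False \<Longrightarrow>
    ((Loc (Cond e c1 c2) sp, True), s) \<rightarrow> ((Loc c2 (PCondRight e c1 sp), True), s)"
| SWhileT: "eval e s = Bool True \<Longrightarrow>
    ((Loc (While e c) sp, True), s) \<rightarrow> ((Loc c (PWhile e sp), True), s)"
| SWhileF: "eval e s = Bool False \<Longrightarrow>
    ((Loc (While e c) sp, True), s) \<rightarrow> ((Loc (While e c) sp, False), s)"
| SNext: "sp \<noteq> PTop \<Longrightarrow> ((Loc c sp, False), s) \<rightarrow> (next_loc c sp, s)"

abbreviation small_steps :: "config \<Rightarrow> config \<Rightarrow> bool" (infix "\<rightarrow>*" 50) where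
  "cf \<rightarrow>* cf' \<equiv> small_step\<^sup>*\<^sup>* cf cf'"

datatype action = NoAct | AssAct vname val

fun action_effect :: "action \<Rightarrow> state \<Rightarrow> state" where
  "action_effect NoAct s = s"
| "action_effect (AssAct x v) s = s(x \<mapsto> v)"

record 'n edge =
  source :: 'n
  action :: action
  dest :: 'n

record 'n ta =
  nodes :: "'n list"
  edges :: "'n edge list"
  init_s :: 'n

definition ta_step :: "'n ta \<Rightarrow> 'n \<times> state \<Rightarrow> 'n \<times> state \<Rightarrow> bool"
  ("_ \<turnstile> _ \<rightarrow>\<^sub>a _" [51, 51, 51] 50) where
  "aut \<turnstile> ls \<rightarrow>\<^sub>a ls' \<longleftrightarrow> (\<exists>e \<in> set (edges aut).
     source e = fst ls \<and> dest e = fst ls' \<and> snd ls' = action_effect (action e) (snd ls))"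

abbreviation ta_steps :: "'n ta \<Rightarrow> 'n \<times> state \<Rightarrow> 'n \<times> state \<Rightarrow> bool"
  ("_ \<turnstile> _ \<rightarrow>\<^sub>a* _" [51, 51, 51] 50) where
  "aut \<turnstile> ls \<rightarrow>\<^sub>a* ls' \<equiv> (ta_step aut)\<^sup>*\<^sup>* ls ls'"

fun all_locations :: "stmt \<Rightarrow> stmt_path \<Rightarrow> location list" where
  "all_locations (Seq c1 c2) sp = Loc (Seq c1 c2) sp #
     all_locations c1 (PSeqLeft sp c2) @ all_locations c2 (PSeqRight c1 sp)"
| "all_locations (Cond e c1 c2) sp = Loc (Cond e c1 c2) sp #
     all_locations c1 (PCondLeft e sp c2) @ all_locations c2 (PCondRight e c1 sp)"
| "all_locations (While e c) sp = Loc (While e c) sp # all_locations c (PWhile e sp)"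
| "all_locations c sp = [Loc c sp]"

definition nodes_of_stmt_locations :: "location list \<Rightarrow> synt_config list" where
  "nodes_of_stmt_locations ls = concat (map (\<lambda>l. [(l, True), (l, False)]) ls)"

fun synt_step_image :: "synt_config \<Rightarrow> synt_config list" where
  "synt_step_image (Loc Empty sp, True) = [(Loc Empty sp, False)]"
| "synt_step_image (Loc (Assign x v) sp, True) = [(Loc (Assign x v) sp, False)]"
| "synt_step_image (Loc (Seq c1 c2) sp, True) = [(Loc c1 (PSeqLeft sp c2), True)]"
| "synt_step_image (Loc (Cond e c1 c2) sp, True) =
     [(Loc c1 (PCondLeft e sp c2), True), (Loc c2 (PCondRight e c1 sp), True)]"
| "synt_step_image (Loc (While e c) sp, True) =
     [(Loc c (PWhile e sp), True), (Loc (While e c) sp, False)]"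
| "synt_step_image (Loc c sp, False) = (if sp = PTop then [] else [next_loc c sp])"

fun action_of_synt_config :: "synt_config \<Rightarrow> action" where
  "action_of_synt_config (Loc (Assign x v) sp, True) = AssAct x v"
| "action_of_synt_config _ = NoAct"

definition stmt_to_ta :: "stmt \<Rightarrow> synt_config ta" where
  "stmt_to_ta c = (let nds = nodes_of_stmt_locations (all_locations c PTop) in
     \<lparr> nodes = nds,
       edges = concat (map (\<lambda>n. map (\<lambda>t. \<lparr>source = n, action = action_of_synt_config n, dest = t\<rparr>)
                                  (synt_step_image n)) nds),
       init_s = (Loc c PTop, True) \<rparr>)"

definition sim_rel :: "config \<Rightarrow> config \<Rightarrow> bool" (infix "\<approx>" 50) where
  "cf \<approx> cfa \<longleftrightarrow> cf = cfa"

end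

theory Submission
  imports Defs
begin

text \<open>
  The automaton has an edge for every syntactic step from every location of the program, and
  each edge carries exactly the state update of the corresponding small step. So it suffices to
  show that every small step is matched by an edge, and that small steps starting in a location
  of the program stay inside the program's locations; the only nontrivial case is leaving a
  substatement, which moves to its parent location.
\<close>

fun parent_loc :: "stmt \<Rightarrow> stmt_path \<Rightarrow> location" where
  "parent_loc c PTop = Loc c PTop"
| "parent_loc c (PSeqLeft sp c2) = Loc (Seq c c2) sp"
| "parent_loc c (PSeqRight c1 sp) = Loc (Seq c1 c) sp"
| "parent_loc c (PCondLeft e sp c2) = Loc (Cond e c c2) sp"
| "parent_loc c (PCondRight e c1 sp) = Loc (Cond e c1 c) sp"
| "parent_loc c (PWhile e sp) = Loc (While e c) sp"

lemma Loc_in_all_locations: "Loc c sp \<in> set (all_locations c sp)"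
  by (cases c) auto

lemma all_locations_trans:
  assumes "Loc c' sp' \<in> set (all_locations c sp)" and "l \<in> set (all_locations c' sp')"
  shows "l \<in> set (all_locations c sp)"
  using assms by (induction c arbitrary: sp) auto

lemma all_locations_path_size:
  "Loc c' sp' \<in> set (all_locations c sp) \<Longrightarrow> (c' = c \<and> sp' = sp) \<or> size sp < size sp'"
  by (induction c arbitrary: sp) (auto, fastforce+)

lemma parent_loc_in_all_locations:
  "Loc c' sp' \<in> set (all_locations c sp) \<Longrightarrow> sp' \<noteq> sp \<Longrightarrow>
   parent_loc c' sp' \<in> set (all_locations c sp)"
proof (induction c arbitrary: sp)
  case (Seq c1 c2)
  then show ?case
    using all_locations_path_size[of c' sp' c1 "PSeqLeft sp c2"]
      all_locations_path_size[of c' sp' c2 "PSeqRight c1 sp"]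
    by (cases "sp' = PSeqLeft sp c2"; cases "sp' = PSeqRight c1 sp") auto
next
  case (Cond e c1 c2)
  then show ?case
    using all_locations_path_size[of c' sp' c1 "PCondLeft e sp c2"]
      all_locations_path_size[of c' sp' c2 "PCondRight e c1 sp"]
    by (cases "sp' = PCondLeft e sp c2"; cases "sp' = PCondRight e c1 sp") auto
next
  case (While e c)
  then show ?case
    using all_locations_path_size[of c' sp' c "PWhile e sp"] by (cases "sp' = PWhile e sp") auto
qed auto

lemma next_loc_in_all_locations_parent:
  "parent_loc c sp = Loc c' sp' \<Longrightarrow> fst (next_loc c sp) \<in> set (all_locations c' sp')"
  by (cases sp) (auto simp: Loc_in_all_locations)

lemma small_step_in_all_locations:
  assumes "(cf, s) \<rightarrow> (cf', s')" and "fst cf \<in> set (all_locations c PTop)"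
  shows "fst cf' \<in> set (all_locations c PTop)"
  using assms(1)
proof cases
  case (SNext sp c1)
  obtain c2 sp2 where parent: "parent_loc c1 sp = Loc c2 sp2"
    by (cases "parent_loc c1 sp")
  have "Loc c2 sp2 \<in> set (all_locations c PTop)"
    using parent_loc_in_all_locations[of c1 sp c PTop] assms(2) SNext parent by simp
  then show ?thesis
    using all_locations_trans next_loc_in_all_locations_parent[OF parent] SNext by auto
qed (use assms(2) all_locations_trans Loc_in_all_locations in auto)

lemma small_step_synt_step_image:
  assumes "(cf, s) \<rightarrow> (cf', s')"
  shows "cf' \<in> set (synt_step_image cf)" and "s' = action_effect (action_of_synt_config cf) s"
  using assms by (cases; cases "fst cf" rule: location.exhaust; auto split: stmt.split)+

lemma stmt_to_ta_step:
  assumes "fst n \<in> set (all_locations c PTop)" and "t \<in> set (synt_step_image n)"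
  shows "stmt_to_ta c \<turnstile> (n, s) \<rightarrow>\<^sub>a (t, action_effect (action_of_synt_config n) s)"
proof -
  have "n \<in> set (nodes_of_stmt_locations (all_locations c PTop))"
    using assms(1) unfolding nodes_of_stmt_locations_def by (cases n; cases "snd n") auto
  then show ?thesis
    using assms(2) unfolding ta_step_def stmt_to_ta_def Let_def
    by (auto intro!: bexI[of _ "\<lparr>source = n, action = action_of_synt_config n, dest = t\<rparr>"])
qed

lemma small_steps_imp_stmt_to_ta_steps:
  assumes "((Loc c PTop, True), s) \<rightarrow>* cfs"
  shows "stmt_to_ta c \<turnstile> ((Loc c PTop, True), s) \<rightarrow>\<^sub>a* cfs"
    and "fst (fst cfs) \<in> set (all_locations c PTop)"
  using assms
proof (induction rule: rtranclp_induct)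
  case base
  show "stmt_to_ta c \<turnstile> ((Loc c PTop, True), s) \<rightarrow>\<^sub>a* ((Loc c PTop, True), s)" by simp
  show "fst (fst ((Loc c PTop, True), s)) \<in> set (all_locations c PTop)"
    by (simp add: Loc_in_all_locations)
next
  case (step cfs1 cfs2)
  obtain cf1 s1 cf2 s2 where cfs: "cfs1 = (cf1, s1)" "cfs2 = (cf2, s2)" by fastforce
  have in_locs: "fst cf1 \<in> set (all_locations c PTop)" using step.IH(2) cfs by simp
  have "stmt_to_ta c \<turnstile> (cf1, s1) \<rightarrow>\<^sub>a (cf2, s2)"
    using stmt_to_ta_step[OF in_locs] small_step_synt_step_image step.hyps(2) cfs by metis
  then show "stmt_to_ta c \<turnstile> ((Loc c PTop, True), s) \<rightarrow>\<^sub>a* cfs2"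
    using step.IH(1) cfs by (simp add: rtranclp.rtrancl_into_rtrancl)
  show "fst (fst cfs2) \<in> set (all_locations c PTop)"
    using small_step_in_all_locations step.hyps(2) in_locs cfs by fastforce
qed

theorem theorem1:
  fixes c :: stmt and s s' :: state and cf' :: synt_config
  assumes "((Loc c PTop, True), s) \<rightarrow>* (cf', s')"
  shows "\<exists>cfa' sa'. (stmt_to_ta c \<turnstile> (init_s (stmt_to_ta c), s) \<rightarrow>\<^sub>a* (cfa', sa'))
                   \<and> (cf', s') \<approx> (cfa', sa')"
proof -
  have "init_s (stmt_to_ta c) = (Loc c PTop, True)"
    by (simp add: stmt_to_ta_def Let_def)
  then show ?thesis
    using small_steps_imp_stmt_to_ta_steps(1)[OF assms] by (cases cf') (auto simp: sim_rel_def)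
qed

end
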